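(* Let $(\Gamma,\rho)$ be a voltage graph with $\Gamma=(V,E)$ a rooted simple digraph on $V=\{v_1,\dots,v_N\}$ and voltage group $G$ a point group in dimension $k$, such that $G_i=G_i^*$ for some (and hence any) root $v_i$ of $\Gamma$. Let $V=\bigsqcup_{l=1}^m V_l$ be the $(\Gamma,\rho)$-adapted partition. Then: (1) Fix a vertex $v_i$. Two vertices $v_j,v_k$ lie in the same subset $V_l$ if and only if $\mathrm{Net}(v_i,v_j)=\mathrm{Net}(v_i,v_k)$. In particular $m=|\mathrm{Net}(v_i,V)|/|G_i|\le |G|/|G_i|$, with equality if and only if $(\Gamma,\rho)$ is nondegenerate. (2) Let $p(t)=(x_1(t),\dots,x_N(t))$ be a trajectory of the $G$-clustering dynamics $\dot x_i=\sum_{v_j\in\mathcal{N}^-(v_i)}a_{ij}(\rho(e_{ij})x_j-x_i)$ (with constants $a_{ij}>0$, $x_i\in\mathbb{R}^k$) converging to $p^*=(x_1^*,\dots,x_N^* )$. Then $x_i^*=x_j^*$ whenever $v_i$ and $v_j$ lie in the same subset $V_l$.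
   Context: Digraphs are simple; $e_{ij}$ denotes the edge $v_i\to v_j$; $\mathcal{N}^-(v_i)=\{v_j:e_{ij}\in E\}$. A voltage graph is $(\Gamma,\rho)$ with $\rho:E\to G$, $G$ finite with identity $\mathbf{1}$; a point group in dimension $k$ is a finite subgroup of $\mathrm{O}(k)$. A semi-walk is $w=v_{i_1}a_1\dots a_{n-1}v_{i_n}$ with each $a_j\in\{e_{i_ji_{j+1}},e_{i_{j+1}i_j}\}$; it is closed if $v_{i_1}=v_{i_n}$, a walk if every $a_j=e_{i_ji_{j+1}}$; a path is a walk with distinct vertices. Net voltage: $f(w)=\bar\rho(a_1)\cdots\bar\rho(a_{n-1})$ with $\bar\rho(a_j)=\rho(a_j)$ for forward edges and $\rho(a_j)^{-1}$ for backward ones ($f=\mathbf 1$ on a single vertex). $G_i$ (local group) is the set of $f(w)$ over closed semi-walks at $v_i$; $G_i^*$ (directed local group) is the set of $f(w)$ over closed walks at $v_i$. $\mathrm{Net}(v_i,v_j)=\{f(w): w$ a semi-walk from $v_i$ to $v_j\}$, $\mathrm{Net}(v_i,V)=\bigcup_{v_j\in V}\mathrm{Net}(v_i,v_j)$. $\Gamma$ is weakly connected if any two vertices are joined by a semi-walk; $(\Gamma,\rho)$ (weakly connected) is nondegenerate if $\mathrm{Net}(v_i,V)=G$ for some vertex $v_i$. $\Gamma$ is rooted if some vertex (a root) is reachable by a path from every vertex. The $(\Gamma,\rho)$-adapted partition of $V$ is the partition into equivalence classes where $v_i\sim v_j$ iff there is a semi-walk $w$ from $v_i$ to $v_j$ with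 $f(w)=\mathbf 1$. *)

theory Defs
  imports "HOL-Analysis.Analysis"
begin

definition point_group :: "(real^'k^'k) set \<Rightarrow> bool" where
  "point_group G \<longleftrightarrow> finite G \<and> G \<subseteq> {A. orthogonal_matrix A} \<and> mat 1 \<in> G \<and>
     (\<forall>A\<in>G. \<forall>B\<in>G. A ** B \<in> G) \<and> (\<forall>A\<in>G. matrix_inv A \<in> G)"

text \<open>Simple digraph on a finite vertex set V: edges are ordered pairs (i,j) meaning
v_i -> v_j, no loops.\<close>
definition simple_digraph :: "'v set \<Rightarrow> ('v \<times> 'v) set \<Rightarrow> bool" where
  "simple_digraph V E \<longleftrightarrow> finite V \<and> E \<subseteq> V \<times> V \<and> (\<forall>v. (v, v) \<notin> E)"

definition voltage_graph ::
  "'v set \<Rightarrow> ('v \<times> 'v) set \<Rightarrow> ('v \<times> 'v \<Rightarrow> 'g) \<Rightarrow> 'g set \<Rightarrow> bool" where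
  "voltage_graph V E \<rho> G \<longleftrightarrow> simple_digraph V E \<and> \<rho> ` E \<subseteq> G"

inductive semiwalk_net ::
  "'v set \<Rightarrow> ('v \<times> 'v) set \<Rightarrow> ('v \<times> 'v \<Rightarrow> real^'k^'k) \<Rightarrow> 'v \<Rightarrow> 'v \<Rightarrow> real^'k^'k \<Rightarrow> bool"
  for V E \<rho> where
  sw_nil: "i \<in> V \<Longrightarrow> semiwalk_net V E \<rho> i i (mat 1)"
| sw_fwd: "semiwalk_net V E \<rho> i j g \<Longrightarrow> (j, k) \<in> E \<Longrightarrow> semiwalk_net V E \<rho> i k (g ** \<rho> (j, k))"
| sw_bwd: "semiwalk_net V E \<rho> i j g \<Longrightarrow> (k, j) \<in> E \<Longrightarrow>
            semiwalk_net V E \<rho> i k (g ** matrix_inv (\<rho> (k, j)))"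

inductive walk_net ::
  "'v set \<Rightarrow> ('v \<times> 'v) set \<Rightarrow> ('v \<times> 'v \<Rightarrow> real^'k^'k) \<Rightarrow> 'v \<Rightarrow> 'v \<Rightarrow> real^'k^'k \<Rightarrow> bool"
  for V E \<rho> where
  w_nil: "i \<in> V \<Longrightarrow> walk_net V E \<rho> i i (mat 1)"
| w_fwd: "walk_net V E \<rho> i j g \<Longrightarrow> (j, k) \<in> E \<Longrightarrow> walk_net V E \<rho> i k (g ** \<rho> (j, k))"

definition local_group where
  "local_group V E \<rho> i = {g. semiwalk_net V E \<rho> i i g}"

definition directed_local_group where
  "directed_local_group V E \<rho> i = {g. walk_net V E \<rho> i i g}"

definition Net where
  "Net V E \<rho> i j = {g. semiwalk_net V E \<rho> i j g}"

definition NetV where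
  "NetV V E \<rho> i = (\<Union>j\<in>V. Net V E \<rho> i j)"

definition nondegenerate where
  "nondegenerate V E \<rho> G \<longleftrightarrow> (\<exists>i\<in>V. NetV V E \<rho> i = G)"

definition is_root :: "'v set \<Rightarrow> ('v \<times> 'v) set \<Rightarrow> 'v \<Rightarrow> bool" where
  "is_root V E r \<longleftrightarrow> r \<in> V \<and> (\<forall>v\<in>V. (v, r) \<in> E\<^sup>*)"

definition rooted :: "'v set \<Rightarrow> ('v \<times> 'v) set \<Rightarrow> bool" where
  "rooted V E \<longleftrightarrow> (\<exists>r. is_root V E r)"

definition adapted_rel where
  "adapted_rel V E \<rho> = {(i, j). i \<in> V \<and> j \<in> V \<and> semiwalk_net V E \<rho> i j (mat 1)}"

definition adapted_partition where
  "adapted_partition V E \<rho> = V // adapted_rel V E \<rho>"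

end

theory Submission
  imports Defs
begin

text \<open>Since all voltages are orthogonal, reversing a semiwalk inverts its net voltage by
  transposition, so two semiwalks from \<open>v\<^sub>i\<close> with the same net voltage can be
  concatenated to a semiwalk of voltage \<open>\<one>\<close> between their endpoints. Hence
  \<open>Net(v\<^sub>i, v\<^sub>j)\<close> are the right cosets of \<open>G\<^sub>i\<close> in
  \<open>Net(v\<^sub>i, V)\<close>, one for each class of the adapted partition, which gives the counting
  statements. For the dynamics, the limit of a convergent trajectory is an equilibrium; for an
  equilibrium, the largest value of \<open>d \<bullet> (g *v x\<^sub>j)\<close> over semiwalks from the
  root with net voltage \<open>g\<close> propagates along outgoing edges, hence along walks back to the root,
  and since \<open>G\<^sub>r = G\<^sub>r\<^sup>*\<close> it is attained by the trivial semiwalk. Taking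
  \<open>d = g *v x\<^sub>j - x\<^sub>r\<close> gives \<open>g *v x\<^sub>j = x\<^sub>r\<close>, so vertices joined by a
  semiwalk of voltage \<open>\<one>\<close> have equal limits.\<close>

lemma orthogonal_matrix_inv_eq_transpose:
  assumes "orthogonal_matrix (A :: real^'n^'n)"
  shows "matrix_inv A = transpose A"
proof -
  have "A ** transpose A = mat 1 \<and> transpose A ** A = mat 1"
    using assms by (simp add: orthogonal_matrix_def)
  then have "A ** matrix_inv A = mat 1"
    unfolding matrix_inv_def by (rule someI2) simp
  then have "transpose A ** (A ** matrix_inv A) = transpose A" by simp
  with assms show ?thesis by (simp add: orthogonal_matrix_def matrix_mul_assoc)
qed

lemma card_image_mult_right_orthogonal:
  assumes "orthogonal_matrix (g :: real^'n^'n)"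
  shows "card ((\<lambda>x. x ** g) ` A) = card A"
proof (rule card_image, rule inj_on_inverseI)
  show "x ** g ** transpose g = x" for x
    using assms by (simp add: orthogonal_matrix_def matrix_mul_assoc[symmetric])
qed

lemma card_image_mult_left_orthogonal:
  assumes "orthogonal_matrix (g :: real^'n^'n)"
  shows "card ((\<lambda>x. g ** x) ` A) = card A"
proof (rule card_image, rule inj_on_inverseI)
  show "transpose g ** (g ** x) = x" for x
    using assms by (simp add: orthogonal_matrix_def matrix_mul_assoc)
qed

lemma card_image_eq_if_same_fibres:
  assumes "\<And>j k. j \<in> A \<Longrightarrow> k \<in> A \<Longrightarrow> f j = f k \<longleftrightarrow> g j = g k"
  shows "card (f ` A) = card (g ` A)"
proof -
  define h where "h y = f (inv_into A g y)" for y
  have h: "h (g j) = f j" if "j \<in> A" for j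
    using assms that inv_into_into[of "g j" g A] f_inv_into_f[of "g j" g A] by (auto simp: h_def)
  then have "f ` A = h ` g ` A" by (auto simp: image_image)
  moreover have "inj_on h (g ` A)"
    by (rule inj_onI) (auto simp: h assms)
  ultimately show ?thesis by (simp add: card_image)
qed

lemma sum_pos_weights_eq_0_imp_eq_max:
  fixes w y :: "'a \<Rightarrow> real"
  assumes "finite N" "\<And>k. k \<in> N \<Longrightarrow> w k > 0" "\<And>k. k \<in> N \<Longrightarrow> y k \<le> m"
    and "(\<Sum>k\<in>N. w k * (y k - m)) = 0" and "k \<in> N"
  shows "y k = m"
proof -
  have "(\<Sum>k\<in>N. w k * (m - y k)) = 0"
    using assms(4) by (simp add: right_diff_distrib sum_subtractf)
  then have "\<forall>k\<in>N. w k * (m - y k) = 0"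
    using assms(1-3)
    by (subst sum_nonneg_eq_0_iff[symmetric]) (auto intro!: mult_nonneg_nonneg simp: order_less_imp_le)
  with assms(2,5) show ?thesis by fastforce
qed

lemma tendsto_derivative_eq_0:
  fixes f f' :: "real \<Rightarrow> 'a::real_inner"
  assumes der: "\<And>t. t \<ge> a \<Longrightarrow> (f has_vector_derivative f' t) (at t within {a..})"
    and lim: "(f \<longlongrightarrow> l) at_top" and lim': "(f' \<longlongrightarrow> l') at_top"
  shows "l' = 0"
proof (rule ccontr)
  assume "l' \<noteq> 0"
  define c where "c = l' \<bullet> l'"
  have "c > 0" using \<open>l' \<noteq> 0\<close> by (simp add: c_def)
  define \<phi> where "\<phi> t = l' \<bullet> f t" for t
  have mvt: "\<exists>\<xi>\<in>{t<..<t+1}. \<phi> (t+1) - \<phi> t = l' \<bullet> f' \<xi>" if "t \<ge> a" for t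
  proof -
    have "(\<phi> has_derivative (\<lambda>h. h * (l' \<bullet> f' s))) (at s within {t..t+1})" if "t \<le> s" for s
    proof -
      have "(f has_vector_derivative f' s) (at s within {t..t+1})"
        using der[of s] \<open>t \<ge> a\<close> that by (auto intro: has_vector_derivative_within_subset)
      then show ?thesis unfolding \<phi>_def has_vector_derivative_def
        by (auto dest: has_derivative_inner_right[of f _ _ l'] simp: ac_simps)
    qed
    then show ?thesis using mvt_simple[of t "t+1" \<phi> "\<lambda>s h. h * (l' \<bullet> f' s)"] by auto
  qed
  have "\<forall>\<^sub>F s in at_top. c/2 < l' \<bullet> f' s"
    using \<open>c > 0\<close> by (intro order_tendstoD(1)) (auto simp: c_def intro!: tendsto_intros lim')
  then obtain T0 where T0: "\<And>s. s \<ge> T0 \<Longrightarrow> c/2 < l' \<bullet> f' s"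
    by (auto simp: eventually_at_top_linorder)
  have "\<forall>\<^sub>F t in at_top. dist (\<phi> t) (l' \<bullet> l) < c/4"
    using \<open>c > 0\<close> by (intro tendstoD) (auto simp: \<phi>_def intro!: tendsto_intros lim)
  then obtain T1 where T1: "\<And>t. t \<ge> T1 \<Longrightarrow> dist (\<phi> t) (l' \<bullet> l) < c/4"
    by (auto simp: eventually_at_top_linorder)
  define t where "t = max a (max T0 T1)"
  obtain \<xi> where "\<xi> > t" "\<phi> (t+1) - \<phi> t = l' \<bullet> f' \<xi>" using mvt[of t] by (auto simp: t_def)
  then have "\<phi> (t+1) - \<phi> t > c/2" using T0[of \<xi>] by (auto simp: t_def)
  moreover have "dist (\<phi> (t+1)) (l' \<bullet> l) < c/4" "dist (\<phi> t) (l' \<bullet> l) < c/4"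
    using T1[of t] T1[of "t+1"] by (auto simp: t_def)
  ultimately show False unfolding dist_real_def by linarith
qed

definition weakly_connected :: "'v set \<Rightarrow> ('v \<times> 'v) set \<Rightarrow> bool" where
  "weakly_connected V E \<longleftrightarrow> (\<forall>i\<in>V. \<forall>j\<in>V. (i, j) \<in> (E \<union> E\<inverse>)\<^sup>*)"

lemma rooted_imp_weakly_connected:
  assumes "rooted V E"
  shows "weakly_connected V E"
proof -
  obtain r where r: "\<forall>v\<in>V. (v, r) \<in> E\<^sup>*" using assms by (auto simp: rooted_def is_root_def)
  have "(i, r) \<in> (E \<union> E\<inverse>)\<^sup>*" "(r, j) \<in> (E \<union> E\<inverse>)\<^sup>*" if "i \<in> V" "j \<in> V" for i j
    using r that rtrancl_mono[of E "E \<union> E\<inverse>"] rtrancl_mono[of "E\<inverse>" "E \<union> E\<inverse>"]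
    by (auto simp: rtrancl_converse)
  then show ?thesis unfolding weakly_connected_def by (meson rtrancl_trans)
qed

definition clustering_field :: "('v \<times> 'v) set \<Rightarrow> ('v \<times> 'v \<Rightarrow> real^'k^'k) \<Rightarrow>
    ('v \<times> 'v \<Rightarrow> real) \<Rightarrow> ('v \<Rightarrow> real^'k) \<Rightarrow> 'v \<Rightarrow> real^'k"
  where "clustering_field E \<rho> a x i = (\<Sum>j\<in>{j. (i, j) \<in> E}. a (i, j) *\<^sub>R (\<rho> (i, j) *v x j - x i))"

lemma inner_mult_clustering_field:
  "d \<bullet> (g *v clustering_field E \<rho> a x j)
     = (\<Sum>k\<in>{k. (j, k) \<in> E}. a (j, k) * (d \<bullet> ((g ** \<rho> (j, k)) *v x k) - d \<bullet> (g *v x j)))"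
  by (simp add: clustering_field_def linear_sum[OF matrix_vector_mul_linear] o_def
      matrix_vector_mult_scaleR matrix_vector_mult_diff_distrib inner_sum_right inner_diff_right
      matrix_vector_mul_assoc)

locale point_group_voltage_graph =
  fixes V :: "'v set" and E :: "('v \<times> 'v) set" and \<rho> :: "'v \<times> 'v \<Rightarrow> real^'k^'k"
    and G :: "(real^'k^'k) set"
  assumes voltage_graph: "voltage_graph V E \<rho> G" and point_group: "point_group G"
begin

abbreviation semiwalk where "semiwalk \<equiv> semiwalk_net V E \<rho>"

lemma edges_subset: "E \<subseteq> V \<times> V" and finite_vertices: "finite V"
  and voltage_in_group: "e \<in> E \<Longrightarrow> \<rho> e \<in> G"
  using voltage_graph unfolding voltage_graph_def simple_digraph_def by auto

lemma finite_group: "finite G" and group_orthogonal: "g \<in> G \<Longrightarrow> orthogonal_matrix g"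
  using point_group unfolding point_group_def by auto

lemma semiwalk_net_in_group: "semiwalk i j g \<Longrightarrow> g \<in> G"
  by (induction rule: semiwalk_net.induct)
    (use point_group voltage_in_group in \<open>auto simp: point_group_def\<close>)

lemma semiwalk_net_orthogonal: "semiwalk i j g \<Longrightarrow> orthogonal_matrix g"
  using semiwalk_net_in_group group_orthogonal by blast

lemma semiwalk_net_vertices: "semiwalk i j g \<Longrightarrow> i \<in> V \<and> j \<in> V"
  by (induction rule: semiwalk_net.induct) (use edges_subset in auto)

lemma semiwalk_net_trans:
  assumes "semiwalk i j g" "semiwalk j k h"
  shows "semiwalk i k (g ** h)"
  using assms(2,1)
proof (induction rule: semiwalk_net.induct)
  case (sw_nil j)
  then show ?case by simp
next
  case (sw_fwd j k h l)
  then show ?case by (metis matrix_mul_assoc semiwalk_net.sw_fwd)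
next
  case (sw_bwd j k h l)
  then show ?case by (metis matrix_mul_assoc semiwalk_net.sw_bwd)
qed

lemma semiwalk_net_edge_fwd:
  assumes "(j, k) \<in> E"
  shows "semiwalk j k (\<rho> (j, k))"
proof -
  have "j \<in> V" using assms edges_subset by auto
  from semiwalk_net.sw_fwd[OF semiwalk_net.sw_nil[where \<rho> = \<rho>, OF this] assms] show ?thesis
    by simp
qed

lemma semiwalk_net_edge_bwd:
  assumes "(j, k) \<in> E"
  shows "semiwalk k j (transpose (\<rho> (j, k)))"
proof -
  have "k \<in> V" using assms edges_subset by auto
  from semiwalk_net.sw_bwd[OF semiwalk_net.sw_nil[where \<rho> = \<rho>, OF this] assms] show ?thesis
    by (simp add: orthogonal_matrix_inv_eq_transpose group_orthogonal voltage_in_group assms)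
qed

lemma semiwalk_net_sym: "semiwalk i j g \<Longrightarrow> semiwalk j i (transpose g)"
proof (induction rule: semiwalk_net.induct)
  case (sw_nil i)
  then show ?case by (simp add: semiwalk_net.sw_nil)
next
  case (sw_fwd i j g k)
  from semiwalk_net_trans[OF semiwalk_net_edge_bwd[OF sw_fwd(2)] sw_fwd(3)]
  show ?case by (simp add: matrix_transpose_mul)
next
  case (sw_bwd i j g k)
  from semiwalk_net_trans[OF semiwalk_net_edge_fwd[OF sw_bwd(2)] sw_bwd(3)]
  show ?case by (simp add: matrix_transpose_mul orthogonal_matrix_inv_eq_transpose
      group_orthogonal voltage_in_group sw_bwd(2))
qed

lemma semiwalk_net_cancel:
  assumes "semiwalk i j g" "semiwalk i k g"
  shows "semiwalk j k (mat 1)"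
  using semiwalk_net_trans[OF semiwalk_net_sym[OF assms(1)] assms(2)]
    semiwalk_net_orthogonal[OF assms(1)] by (simp add: orthogonal_matrix_def)

lemma rtrancl_imp_walk_net: "(i, j) \<in> E\<^sup>* \<Longrightarrow> i \<in> V \<Longrightarrow> \<exists>g. walk_net V E \<rho> i j g"
  by (induction rule: rtrancl_induct) (auto intro: walk_net.intros)

lemma rtrancl_sym_imp_semiwalk_net: "(i, j) \<in> (E \<union> E\<inverse>)\<^sup>* \<Longrightarrow> i \<in> V \<Longrightarrow> \<exists>g. semiwalk i j g"
proof (induction rule: rtrancl_induct)
  case base
  then show ?case by (blast intro: semiwalk_net.sw_nil)
next
  case (step j k)
  then obtain g where "semiwalk i j g" by blast
  with step(2) show ?case by (blast intro: semiwalk_net.sw_fwd semiwalk_net.sw_bwd)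
qed

lemma equiv_adapted_rel: "equiv V (adapted_rel V E \<rho>)"
proof (rule equivI)
  show "adapted_rel V E \<rho> \<subseteq> V \<times> V"
    by (auto simp: adapted_rel_def)
  show "refl_on V (adapted_rel V E \<rho>)"
    by (rule refl_onI) (simp add: adapted_rel_def semiwalk_net.sw_nil)
  show "sym (adapted_rel V E \<rho>)"
  proof (rule symI)
    fix i j assume "(i, j) \<in> adapted_rel V E \<rho>"
    with semiwalk_net_sym[of i j "mat 1"] show "(j, i) \<in> adapted_rel V E \<rho>"
      by (simp add: adapted_rel_def)
  qed
  show "trans (adapted_rel V E \<rho>)"
  proof (rule transI)
    fix i j k assume "(i, j) \<in> adapted_rel V E \<rho>" "(j, k) \<in> adapted_rel V E \<rho>"
    with semiwalk_net_trans[of i j "mat 1" k "mat 1"] show "(i, k) \<in> adapted_rel V E \<rho>"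
      by (simp add: adapted_rel_def)
  qed
qed

lemma same_adapted_class_iff:
  assumes "j \<in> V" "k \<in> V"
  shows "(\<exists>P\<in>adapted_partition V E \<rho>. j \<in> P \<and> k \<in> P) \<longleftrightarrow> semiwalk j k (mat 1)"
proof -
  have "(\<exists>P\<in>adapted_partition V E \<rho>. j \<in> P \<and> k \<in> P) \<longleftrightarrow> (j, k) \<in> adapted_rel V E \<rho>"
    unfolding adapted_partition_def
  proof
    assume "\<exists>P\<in>V // adapted_rel V E \<rho>. j \<in> P \<and> k \<in> P"
    then obtain P where P: "P \<in> V // adapted_rel V E \<rho>" "j \<in> P" "k \<in> P" by blast
    show "(j, k) \<in> adapted_rel V E \<rho>"
      using quotient_eq_iff[OF equiv_adapted_rel P(1) P(1) P(2) P(3)] by simp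
  next
    assume "(j, k) \<in> adapted_rel V E \<rho>"
    then show "\<exists>P\<in>V // adapted_rel V E \<rho>. j \<in> P \<and> k \<in> P"
      using quotientI[OF assms(1)] equiv_class_self[OF equiv_adapted_rel assms(1)] by blast
  qed
  with assms show ?thesis by (simp add: adapted_rel_def)
qed

lemma Net_subset_group: "Net V E \<rho> i j \<subseteq> G"
  and NetV_subset_group: "NetV V E \<rho> i \<subseteq> G"
  and local_group_subset_group: "local_group V E \<rho> i \<subseteq> G"
  unfolding Net_def NetV_def local_group_def using semiwalk_net_in_group by auto

lemma finite_out_neighbours: "finite {k. (j, k) \<in> E}"
  using finite_subset[OF _ finite_vertices, of "{k. (j, k) \<in> E}"] edges_subset by auto

lemma equilibrium_max_propagates_along_edge:
  assumes apos: "\<forall>e\<in>E. a e > 0" and eq: "\<And>j. j \<in> V \<Longrightarrow> clustering_field E \<rho> a xs j = 0"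
    and max: "\<And>k h. semiwalk r k h \<Longrightarrow> d \<bullet> (h *v xs k) \<le> M"
    and "semiwalk r j g" "d \<bullet> (g *v xs j) = M" "(j, k) \<in> E"
  shows "d \<bullet> ((g ** \<rho> (j, k)) *v xs k) = M"
proof -
  have "j \<in> V" using semiwalk_net_vertices[OF \<open>semiwalk r j g\<close>] by blast
  then have "(\<Sum>k\<in>{k. (j, k) \<in> E}. a (j, k) * (d \<bullet> ((g ** \<rho> (j, k)) *v xs k) - M)) = 0"
    using eq inner_mult_clustering_field[of d g E \<rho> a xs j] assms(5) by simp
  then show ?thesis
    using finite_out_neighbours apos max semiwalk_net.sw_fwd[OF \<open>semiwalk r j g\<close>] assms(6)
    by (intro sum_pos_weights_eq_0_imp_eq_max[where w = "\<lambda>k. a (j, k)"]) auto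
qed

lemma equilibrium_max_propagates_along_walk:
  assumes apos: "\<forall>e\<in>E. a e > 0" and eq: "\<And>j. j \<in> V \<Longrightarrow> clustering_field E \<rho> a xs j = 0"
    and max: "\<And>k h. semiwalk r k h \<Longrightarrow> d \<bullet> (h *v xs k) \<le> M"
    and "walk_net V E \<rho> j k w" "semiwalk r j g" "d \<bullet> (g *v xs j) = M"
  shows "semiwalk r k (g ** w) \<and> d \<bullet> ((g ** w) *v xs k) = M"
  using assms(4-6)
proof (induction rule: walk_net.induct)
  case (w_nil j)
  then show ?case by simp
next
  case (w_fwd j k w l)
  then have "semiwalk r k (g ** w)" "d \<bullet> ((g ** w) *v xs k) = M" by auto
  with equilibrium_max_propagates_along_edge[OF apos eq max this w_fwd(2)]
    semiwalk_net.sw_fwd[OF this(1) w_fwd(2)]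
  show ?case by (simp add: matrix_mul_assoc)
qed

lemma equilibrium_inner_le_root:
  assumes root: "is_root V E r" and loc: "local_group V E \<rho> r = directed_local_group V E \<rho> r"
    and apos: "\<forall>e\<in>E. a e > 0" and eq: "\<And>j. j \<in> V \<Longrightarrow> clustering_field E \<rho> a xs j = 0"
    and "semiwalk r j g"
  shows "d \<bullet> (g *v xs j) \<le> d \<bullet> xs r"
proof -
  define S where "S = {(k, h). semiwalk r k h}"
  define M where "M = Max ((\<lambda>(k, h). d \<bullet> (h *v xs k)) ` S)"
  have "S \<subseteq> V \<times> G" using semiwalk_net_vertices semiwalk_net_in_group by (auto simp: S_def)
  then have "finite S" using finite_subset finite_vertices finite_group by blast
  have "r \<in> V" using root by (simp add: is_root_def)
  then have "(r, mat 1) \<in> S" by (simp add: S_def semiwalk_net.sw_nil)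
  have max: "d \<bullet> (h *v xs k) \<le> M" if "semiwalk r k h" for k h
    using \<open>finite S\<close> that by (auto simp: M_def S_def intro!: Max_ge)
  have "M \<in> (\<lambda>(k, h). d \<bullet> (h *v xs k)) ` S"
    unfolding M_def using \<open>finite S\<close> \<open>(r, mat 1) \<in> S\<close> by (intro Max_in) auto
  then obtain j1 g1 where j1: "semiwalk r j1 g1" "d \<bullet> (g1 *v xs j1) = M"
    by (auto simp: S_def)
  obtain w where "walk_net V E \<rho> j1 r w"
    using rtrancl_imp_walk_net root semiwalk_net_vertices[OF j1(1)] unfolding is_root_def by blast
  from equilibrium_max_propagates_along_walk[OF apos eq max this j1]
  have closed: "semiwalk r r (g1 ** w)" "d \<bullet> ((g1 ** w) *v xs r) = M" by auto
  then have "walk_net V E \<rho> r r (transpose (g1 ** w))"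
    using loc semiwalk_net_sym[OF closed(1)] by (auto simp: local_group_def directed_local_group_def)
  from equilibrium_max_propagates_along_walk[OF apos eq max this closed]
  have "d \<bullet> xs r = M"
    using semiwalk_net_orthogonal[OF closed(1)] by (simp add: orthogonal_matrix_def)
  with max[OF \<open>semiwalk r j g\<close>] show ?thesis by simp
qed

lemma equilibrium_net_voltage_eq_root:
  assumes "is_root V E r" "local_group V E \<rho> r = directed_local_group V E \<rho> r"
    and "\<forall>e\<in>E. a e > 0" "\<And>j. j \<in> V \<Longrightarrow> clustering_field E \<rho> a xs j = 0"
    and "semiwalk r j g"
  shows "g *v xs j = xs r"
proof -
  define d where "d = g *v xs j - xs r"
  have "d \<bullet> (g *v xs j) \<le> d \<bullet> xs r" by (rule equilibrium_inner_le_root[OF assms])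
  then have "d \<bullet> d \<le> 0" by (simp add: d_def inner_diff_right)
  then have "d \<bullet> d = 0" using inner_ge_zero[of d] by linarith
  then show ?thesis by (simp add: d_def)
qed

lemma clustering_limit_is_equilibrium:
  assumes der: "\<And>t i. t \<ge> 0 \<Longrightarrow> i \<in> V \<Longrightarrow>
      ((\<lambda>s. x s i) has_vector_derivative clustering_field E \<rho> a (x t) i) (at t within {0..})"
    and lim: "\<And>i. i \<in> V \<Longrightarrow> ((\<lambda>t. x t i) \<longlongrightarrow> xs i) at_top"
    and "j \<in> V"
  shows "clustering_field E \<rho> a xs j = 0"
proof (rule tendsto_derivative_eq_0)
  show "((\<lambda>s. x s j) has_vector_derivative clustering_field E \<rho> a (x t) j) (at t within {0..})"
    if "t \<ge> 0" for t using der that \<open>j \<in> V\<close> .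
  show "((\<lambda>t. x t j) \<longlongrightarrow> xs j) at_top" using lim \<open>j \<in> V\<close> .
  have "k \<in> V" if "(j, k) \<in> E" for k using that edges_subset by auto
  then show "((\<lambda>t. clustering_field E \<rho> a (x t) j) \<longlongrightarrow> clustering_field E \<rho> a xs j) at_top"
    unfolding clustering_field_def using \<open>j \<in> V\<close>
    by (intro tendsto_intros lim isCont_tendsto_compose[OF matrix_vector_mult_linear_continuous_at])
      auto
qed

end

locale weakly_connected_voltage_graph = point_group_voltage_graph +
  assumes weakly_connected: "weakly_connected V E"
begin

lemma semiwalk_net_exists: "i \<in> V \<Longrightarrow> j \<in> V \<Longrightarrow> \<exists>g. semiwalk i j g"
  using weakly_connected rtrancl_sym_imp_semiwalk_net by (auto simp: weakly_connected_def)

lemma Net_eq_iff: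
  assumes "i \<in> V" "j \<in> V" "k \<in> V"
  shows "Net V E \<rho> i j = Net V E \<rho> i k \<longleftrightarrow> semiwalk j k (mat 1)"
proof
  assume "Net V E \<rho> i j = Net V E \<rho> i k"
  moreover obtain g where "semiwalk i j g" using semiwalk_net_exists assms by blast
  ultimately show "semiwalk j k (mat 1)" by (auto simp: Net_def intro: semiwalk_net_cancel)
next
  assume "semiwalk j k (mat 1)"
  then have "semiwalk i j g \<longleftrightarrow> semiwalk i k g" for g
    using semiwalk_net_trans[of i j g k "mat 1"] semiwalk_net_trans[of i k g j "mat 1"]
      semiwalk_net_sym[of j k "mat 1"] by auto
  then show "Net V E \<rho> i j = Net V E \<rho> i k" by (simp add: Net_def)
qed

lemma card_Net:
  assumes "i \<in> V" "j \<in> V"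
  shows "card (Net V E \<rho> i j) = card (local_group V E \<rho> i)"
proof -
  obtain g where g: "semiwalk i j g" using semiwalk_net_exists assms by blast
  have "Net V E \<rho> i j = (\<lambda>h. h ** g) ` local_group V E \<rho> i"
  proof (intro subset_antisym subsetI)
    fix h assume "h \<in> Net V E \<rho> i j"
    then have "semiwalk i i (h ** transpose g)"
      using semiwalk_net_trans[OF _ semiwalk_net_sym[OF g]] by (simp add: Net_def)
    moreover have "h = h ** transpose g ** g"
      using semiwalk_net_orthogonal[OF g]
      by (simp add: orthogonal_matrix_def matrix_mul_assoc[symmetric])
    ultimately show "h \<in> (\<lambda>h. h ** g) ` local_group V E \<rho> i"
      by (auto simp: local_group_def)
  next
    fix h assume "h \<in> (\<lambda>h. h ** g) ` local_group V E \<rho> i"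
    then show "h \<in> Net V E \<rho> i j"
      using semiwalk_net_trans[OF _ g] by (auto simp: local_group_def Net_def)
  qed
  then show ?thesis
    using card_image_mult_right_orthogonal[OF semiwalk_net_orthogonal[OF g]] by simp
qed

lemma card_NetV:
  assumes "i \<in> V"
  shows "card (NetV V E \<rho> i) = card (adapted_partition V E \<rho>) * card (local_group V E \<rho> i)"
proof -
  define F where "F = Net V E \<rho> i ` V"
  have "pairwise disjnt F"
  proof (rule pairwiseI)
    fix A B assume "A \<in> F" "B \<in> F" "A \<noteq> B"
    then obtain j k where jk: "j \<in> V" "k \<in> V" "A = Net V E \<rho> i j" "B = Net V E \<rho> i k"
      by (auto simp: F_def)
    with \<open>A \<noteq> B\<close> Net_eq_iff[OF assms jk(1,2)] show "disjnt A B"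
      by (auto simp: disjnt_def Net_def dest: semiwalk_net_cancel)
  qed
  then have "card (\<Union>F) = sum card F"
    using finite_subset[OF Net_subset_group finite_group]
    by (intro card_Union_disjoint) (auto simp: F_def)
  also have "\<dots> = (\<Sum>A\<in>F. card (local_group V E \<rho> i))"
    by (rule sum.cong) (auto simp: F_def card_Net[OF assms])
  also have "\<dots> = card F * card (local_group V E \<rho> i)" by simp
  also have "card F = card ((\<lambda>j. adapted_rel V E \<rho> `` {j}) ` V)"
    unfolding F_def using Net_eq_iff[OF assms] eq_equiv_class_iff[OF equiv_adapted_rel]
    by (intro card_image_eq_if_same_fibres) (simp add: adapted_rel_def)
  also have "(\<lambda>j. adapted_rel V E \<rho> `` {j}) ` V = adapted_partition V E \<rho>"
    by (auto simp: adapted_partition_def quotient_def)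
  finally show ?thesis by (simp add: F_def NetV_def)
qed

lemma card_NetV_independent:
  assumes "i \<in> V" "i' \<in> V"
  shows "card (NetV V E \<rho> i') = card (NetV V E \<rho> i)"
proof -
  obtain g where g: "semiwalk i' i g" using semiwalk_net_exists assms by blast
  have "NetV V E \<rho> i' = (\<lambda>h. g ** h) ` NetV V E \<rho> i"
  proof (intro subset_antisym subsetI)
    fix h assume "h \<in> NetV V E \<rho> i'"
    then obtain j where "j \<in> V" "semiwalk i' j h" by (auto simp: NetV_def Net_def)
    then have "transpose g ** h \<in> NetV V E \<rho> i"
      using semiwalk_net_trans[OF semiwalk_net_sym[OF g]] by (auto simp: NetV_def Net_def)
    moreover have "h = g ** (transpose g ** h)"
      using semiwalk_net_orthogonal[OF g] by (simp add: orthogonal_matrix_def matrix_mul_assoc)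
    ultimately show "h \<in> (\<lambda>h. g ** h) ` NetV V E \<rho> i" by blast
  next
    fix h assume "h \<in> (\<lambda>h. g ** h) ` NetV V E \<rho> i"
    then show "h \<in> NetV V E \<rho> i'"
      using semiwalk_net_trans[OF g] by (auto simp: NetV_def Net_def)
  qed
  then show ?thesis
    using card_image_mult_left_orthogonal[OF semiwalk_net_orthogonal[OF g]] by simp
qed

lemma card_local_group_pos: "i \<in> V \<Longrightarrow> card (local_group V E \<rho> i) > 0"
  using finite_subset[OF local_group_subset_group finite_group]
  by (auto simp: card_gt_0_iff local_group_def intro: semiwalk_net.sw_nil)

lemma same_adapted_class_iff_Net_eq:
  assumes "i \<in> V" "j \<in> V" "k \<in> V"
  shows "(\<exists>P\<in>adapted_partition V E \<rho>. j \<in> P \<and> k \<in> P) \<longleftrightarrow> Net V E \<rho> i j = Net V E \<rho> i k"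
  using same_adapted_class_iff[OF assms(2,3)] Net_eq_iff[OF assms] by simp

lemma card_adapted_partition:
  assumes "i \<in> V"
  shows "real (card (adapted_partition V E \<rho>))
           = real (card (NetV V E \<rho> i)) / real (card (local_group V E \<rho> i))"
  using card_NetV[OF assms] card_local_group_pos[OF assms] by simp

lemma card_adapted_partition_le:
  assumes "i \<in> V"
  shows "real (card (adapted_partition V E \<rho>)) \<le> real (card G) / real (card (local_group V E \<rho> i))"
  unfolding card_adapted_partition[OF assms]
  using card_mono[OF finite_group NetV_subset_group] by (intro divide_right_mono) auto

lemma card_adapted_partition_eq_iff_nondegenerate:
  assumes "i \<in> V"
  shows "real (card (adapted_partition V E \<rho>)) = real (card G) / real (card (local_group V E \<rho> i))
           \<longleftrightarrow> nondegenerate V E \<rho> G"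
proof -
  have "real (card (adapted_partition V E \<rho>)) = real (card G) / real (card (local_group V E \<rho> i))
          \<longleftrightarrow> card (NetV V E \<rho> i) = card G"
    unfolding card_adapted_partition[OF assms] using card_local_group_pos[OF assms] by simp
  also have "\<dots> \<longleftrightarrow> NetV V E \<rho> i = G"
    using card_subset_eq[OF finite_group NetV_subset_group] by auto
  also have "\<dots> \<longleftrightarrow> nondegenerate V E \<rho> G"
    using card_NetV_independent[OF assms] card_subset_eq[OF finite_group NetV_subset_group] assms
    unfolding nondegenerate_def by metis
  finally show ?thesis .
qed

lemma clustering_limit_eq_in_adapted_class:
  assumes "is_root V E r" "local_group V E \<rho> r = directed_local_group V E \<rho> r"
    and "\<forall>e\<in>E. a e > 0"
    and "\<forall>t\<ge>0. \<forall>i\<in>V.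
      ((\<lambda>s. x s i) has_vector_derivative clustering_field E \<rho> a (x t) i) (at t within {0..})"
    and "\<forall>i\<in>V. ((\<lambda>t. x t i) \<longlongrightarrow> xs i) at_top"
    and "i \<in> V" "j \<in> V" "\<exists>P\<in>adapted_partition V E \<rho>. i \<in> P \<and> j \<in> P"
  shows "xs i = xs j"
proof -
  have "r \<in> V" using assms(1) by (simp add: is_root_def)
  then obtain g where g: "semiwalk r i g" using semiwalk_net_exists assms(6) by blast
  have "semiwalk i j (mat 1)" using same_adapted_class_iff assms(6-8) by blast
  with g have "semiwalk r j g" using semiwalk_net_trans by fastforce
  have "clustering_field E \<rho> a xs k = 0" if "k \<in> V" for k
    using assms(4,5) that by (intro clustering_limit_is_equilibrium[where x = x]) auto
  from equilibrium_net_voltage_eq_root[OF assms(1-3) this] g \<open>semiwalk r j g\<close>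
  have "g *v xs i = g *v xs j" by auto
  then have "transpose g *v (g *v xs i) = transpose g *v (g *v xs j)" by simp
  then show ?thesis
    using semiwalk_net_orthogonal[OF g] by (simp add: orthogonal_matrix_def matrix_vector_mul_assoc)
qed

end

theorem corollary4:
  fixes V :: "'v set" and E :: "('v \<times> 'v) set"
    and \<rho> :: "'v \<times> 'v \<Rightarrow> real^'k^'k" and G :: "(real^'k^'k) set"
  assumes vg: "voltage_graph V E \<rho> G"
    and pg: "point_group G"
    and rt: "rooted V E"
    and loc: "\<exists>r. is_root V E r \<and> local_group V E \<rho> r = directed_local_group V E \<rho> r"
  shows
   "(\<forall>i\<in>V.
       (\<forall>j\<in>V. \<forall>k\<in>V. (\<exists>P\<in>adapted_partition V E \<rho>. j \<in> P \<and> k \<in> P)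
                        \<longleftrightarrow> Net V E \<rho> i j = Net V E \<rho> i k)
     \<and> real (card (adapted_partition V E \<rho>))
         = real (card (NetV V E \<rho> i)) / real (card (local_group V E \<rho> i))
     \<and> real (card (adapted_partition V E \<rho>))
         \<le> real (card G) / real (card (local_group V E \<rho> i))
     \<and> (real (card (adapted_partition V E \<rho>))
          = real (card G) / real (card (local_group V E \<rho> i))
        \<longleftrightarrow> nondegenerate V E \<rho> G))
    \<and>
    (\<forall>(a :: 'v \<times> 'v \<Rightarrow> real) (x :: real \<Rightarrow> 'v \<Rightarrow> real^'k) (xs :: 'v \<Rightarrow> real^'k).
       (\<forall>e\<in>E. a e > 0) \<longrightarrow>
       (\<forall>t\<ge>0. \<forall>i\<in>V. ((\<lambda>s. x s i) has_vector_derivative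
            (\<Sum>j\<in>{j. (i, j) \<in> E}. a (i, j) *\<^sub>R (\<rho> (i, j) *v x t j - x t i))) (at t within {0..})) \<longrightarrow>
       (\<forall>i\<in>V. ((\<lambda>t. x t i) \<longlongrightarrow> xs i) at_top) \<longrightarrow>
       (\<forall>i\<in>V. \<forall>j\<in>V. (\<exists>P\<in>adapted_partition V E \<rho>. i \<in> P \<and> j \<in> P) \<longrightarrow> xs i = xs j))"
proof -
  interpret weakly_connected_voltage_graph V E \<rho> G
    by unfold_locales (use vg pg rooted_imp_weakly_connected[OF rt] in auto)
  obtain r where "is_root V E r" "local_group V E \<rho> r = directed_local_group V E \<rho> r"
    using loc by blast
  note limits_agree = clustering_limit_eq_in_adapted_class[OF this, unfolded clustering_field_def]
  show ?thesis
  proof (intro conjI ballI allI impI)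
    fix i j k assume "i \<in> V" "j \<in> V" "k \<in> V"
    then show "(\<exists>P\<in>adapted_partition V E \<rho>. j \<in> P \<and> k \<in> P)
        \<longleftrightarrow> Net V E \<rho> i j = Net V E \<rho> i k"
      by (rule same_adapted_class_iff_Net_eq)
  qed (fact card_adapted_partition card_adapted_partition_le
      card_adapted_partition_eq_iff_nondegenerate limits_agree)+
qed

end
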